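(* Let $K$ be a field and let $f\colon\mathbb Z^k\to K$ be a hypergeometric term on $\mathbb Z^k$ that is not a zero divisor. Then for each $\vec v\in\mathbb Z^k$ there is a unique term ratio of $f$ in the direction $\vec v$.
   Context: For $f\colon\mathbb Z^k\to K$ and $\vec v\in\mathbb Z^k$ write $f^{\vec v}(\vec z)=f(\vec z+\vec v)$. A hypergeometric term on $\mathbb Z^k$ over $K$ is a function $f\colon\mathbb Z^k\to K$ such that for each $i\in\{1,\dots,k\}$ there are nonzero polynomials $A_i,B_i\in K[\vec z]$ with $A_i(\vec z)f(\vec z)=B_i(\vec z)f(\vec z+\vec e_i)$ for all $\vec z\in\mathbb Z^k$. $f$ is a zero divisor if there is a nonzero polynomial $p$ with $p(\vec z)f(\vec z)=0$ for all $\vec z$. A term ratio of $f$ in the direction $\vec v$ is a rational function $R_{\vec v}=A_{\vec v}/B_{\vec v}\in K(\vec z)$ where $A_{\vec v},B_{\vec v}\in K[\vec z]$ are nonzero polynomials with $A_{\vec v}f=B_{\vec v}f^{\vec v}$ pointwise on $\mathbb Z^k$. *)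

theory Defs
  imports Main "HOL-Library.Poly_Mapping"
begin

text \<open>Multivariate polynomials over a field K in variables indexed by a finite type 'n
  (so k = CARD('n)); monomials are finitely supported exponent vectors.
  Points of Z^k are functions 'n \<Rightarrow> int.\<close>

type_synonym ('n, 'a) mpoly = "('n \<Rightarrow>\<^sub>0 nat) \<Rightarrow>\<^sub>0 'a"

definition monom_eval :: "('n \<Rightarrow>\<^sub>0 nat) \<Rightarrow> ('n \<Rightarrow> int) \<Rightarrow> 'a::comm_ring_1" where
  "monom_eval m z = (\<Prod>i\<in>Poly_Mapping.keys m. of_int (z i) ^ Poly_Mapping.lookup m i)"

definition mpoly_eval :: "('n, 'a::comm_ring_1) mpoly \<Rightarrow> ('n \<Rightarrow> int) \<Rightarrow> 'a" where
  "mpoly_eval p z = (\<Sum>m\<in>Poly_Mapping.keys p. Poly_Mapping.lookup p m * monom_eval m z)"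

definition unit_vec :: "'n \<Rightarrow> ('n \<Rightarrow> int)" where
  "unit_vec i = (\<lambda>j. if j = i then 1 else 0)"

definition shift :: "(('n \<Rightarrow> int) \<Rightarrow> 'a) \<Rightarrow> ('n \<Rightarrow> int) \<Rightarrow> (('n \<Rightarrow> int) \<Rightarrow> 'a)" where
  "shift f v = (\<lambda>z. f (\<lambda>j. z j + v j))"

definition hypergeometric_term :: "(('n::finite \<Rightarrow> int) \<Rightarrow> 'a::field) \<Rightarrow> bool" where
  "hypergeometric_term f \<longleftrightarrow>
     (\<forall>i. \<exists>A B :: ('n, 'a) mpoly. A \<noteq> 0 \<and> B \<noteq> 0 \<and>
        (\<forall>z. mpoly_eval A z * f z = mpoly_eval B z * shift f (unit_vec i) z))"

definition zero_divisor :: "(('n::finite \<Rightarrow> int) \<Rightarrow> 'a::field) \<Rightarrow> bool" where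
  "zero_divisor f \<longleftrightarrow> (\<exists>p :: ('n, 'a) mpoly. p \<noteq> 0 \<and> (\<forall>z. mpoly_eval p z * f z = 0))"

text \<open>(A, B) represents the term ratio A/B of f in direction v.\<close>
definition is_term_ratio ::
  "(('n::finite \<Rightarrow> int) \<Rightarrow> 'a::field) \<Rightarrow> ('n \<Rightarrow> int) \<Rightarrow> ('n, 'a) mpoly \<Rightarrow> ('n, 'a) mpoly \<Rightarrow> bool" where
  "is_term_ratio f v A B \<longleftrightarrow> A \<noteq> 0 \<and> B \<noteq> 0 \<and>
     (\<forall>z. mpoly_eval A z * f z = mpoly_eval B z * shift f v z)"

text \<open>Two representatives A/B and A'/B' are the same rational function iff A*B' = A'*B.\<close>
definition unique_term_ratio :: "(('n::finite \<Rightarrow> int) \<Rightarrow> 'a::field) \<Rightarrow> ('n \<Rightarrow> int) \<Rightarrow> bool" where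
  "unique_term_ratio f v \<longleftrightarrow>
     (\<exists>A B. is_term_ratio f v A B \<and>
        (\<forall>A' B'. is_term_ratio f v A' B' \<longrightarrow> A * B' = A' * B))"

end

theory Submission
  imports Defs
begin

text \<open>Term ratios in the directions of the unit vectors exist by assumption. If \<open>A f = B f\<^sup>v\<close> and
  \<open>C f = D f\<^sup>w\<close>, then shifting the second identity by \<open>v\<close> gives \<open>A C\<^sup>v f = B D\<^sup>v f\<^sup>v\<^sup>+\<^sup>w\<close>, and
  shifting the first by \<open>-v\<close> gives \<open>B\<^sup>-\<^sup>v f = A\<^sup>-\<^sup>v f\<^sup>-\<^sup>v\<close>; these products and shifts stay nonzero
  because multivariate polynomials form a domain and a polynomial vanishing on all of \<open>\<int>\<^sup>k\<close>
  would annihilate \<open>f\<close>. Hence term ratios exist in every direction. Two of them, \<open>A/B\<close> and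
  \<open>A'/B'\<close>, satisfy \<open>(A B' - A' B) f = 0\<close>, so \<open>A B' = A' B\<close> since \<open>f\<close> is not a zero divisor.\<close>

lemma lookup_mult_at_maximal_keys:
  fixes p q :: "'m::cancel_comm_monoid_add \<Rightarrow>\<^sub>0 'b::semiring_0"
    and \<phi> :: "'m \<Rightarrow> 'l::{ordered_cancel_comm_monoid_add, linorder}"
  assumes "inj \<phi>" and \<phi>_add: "\<And>a b. \<phi> (a + b) = \<phi> a + \<phi> b"
    and a_max: "\<forall>x\<in>Poly_Mapping.keys p. \<phi> x \<le> \<phi> a"
    and b_max: "\<forall>y\<in>Poly_Mapping.keys q. \<phi> y \<le> \<phi> b"
  shows "Poly_Mapping.lookup (p * q) (a + b) = Poly_Mapping.lookup p a * Poly_Mapping.lookup q b"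
proof -
  have off_max: "Poly_Mapping.lookup p x * Poly_Mapping.lookup q y = 0"
    if "a + b = x + y" "x \<noteq> a" for x y
  proof (rule ccontr)
    assume "Poly_Mapping.lookup p x * Poly_Mapping.lookup q y \<noteq> 0"
    then have "x \<in> Poly_Mapping.keys p" "y \<in> Poly_Mapping.keys q"
      by (auto simp: in_keys_iff)
    then have "\<phi> x < \<phi> a" "\<phi> y \<le> \<phi> b"
      using a_max b_max \<open>x \<noteq> a\<close> \<open>inj \<phi>\<close> by (auto simp: order_le_less dest: injD)
    then have "\<phi> x + \<phi> y < \<phi> a + \<phi> b"
      by (rule add_less_le_mono)
    with that show False
      by (metis \<phi>_add less_irrefl)
  qed
  have "Poly_Mapping.lookup p x * (\<Sum>y. Poly_Mapping.lookup q y when a + b = x + y)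
      = (Poly_Mapping.lookup p a * Poly_Mapping.lookup q b when x = a)" for x
  proof (cases "x = a")
    case True
    then show ?thesis by simp
  next
    case False
    have "Poly_Mapping.lookup p x * (\<Sum>y. Poly_Mapping.lookup q y when a + b = x + y)
        = (\<Sum>y. Poly_Mapping.lookup p x * (Poly_Mapping.lookup q y when a + b = x + y))"
      by (rule Sum_any_right_distrib, rule finite_subset[OF _ finite_keys]) (auto simp: in_keys_iff)
    also have "\<dots> = (\<Sum>y::'m. 0)"
      by (rule Sum_any.cong) (use off_max False in \<open>simp add: when_def\<close>)
    finally show ?thesis
      using False by simp
  qed
  then show ?thesis
    by (simp add: lookup_mult)
qed

lemma mult_neq_0_if_keys_embed_in_linorder:
  fixes p q :: "'m::cancel_comm_monoid_add \<Rightarrow>\<^sub>0 'b::semiring_no_zero_divisors"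
    and \<phi> :: "'m \<Rightarrow> 'l::{ordered_cancel_comm_monoid_add, linorder}"
  assumes "inj \<phi>" and "\<And>a b. \<phi> (a + b) = \<phi> a + \<phi> b"
    and "p \<noteq> 0" and "q \<noteq> 0"
  shows "p * q \<noteq> 0"
proof -
  have "\<exists>a\<in>Poly_Mapping.keys r. \<forall>x\<in>Poly_Mapping.keys r. \<phi> x \<le> \<phi> a"
    if "r \<noteq> 0" for r :: "'m \<Rightarrow>\<^sub>0 'b"
  proof -
    have "Max (\<phi> ` Poly_Mapping.keys r) \<in> \<phi> ` Poly_Mapping.keys r"
      using that by simp
    then show ?thesis
      by (metis Max_ge finite_imageI finite_keys image_eqI imageE)
  qed
  then obtain a b where "a \<in> Poly_Mapping.keys p" and a_max: "\<forall>x\<in>Poly_Mapping.keys p. \<phi> x \<le> \<phi> a"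
    and "b \<in> Poly_Mapping.keys q" and b_max: "\<forall>y\<in>Poly_Mapping.keys q. \<phi> y \<le> \<phi> b"
    using assms by meson
  then have "Poly_Mapping.lookup (p * q) (a + b) \<noteq> 0"
    by (simp add: lookup_mult_at_maximal_keys[OF assms(1,2) a_max b_max] in_keys_iff)
  then show ?thesis
    by auto
qed

lemma mpoly_mult_neq_0:
  fixes p q :: "('n::finite, 'a::semiring_no_zero_divisors) mpoly"
  assumes "p \<noteq> 0" "q \<noteq> 0"
  shows "p * q \<noteq> 0"
proof -
  \<comment> \<open>Relabel the variables by naturals: monomials over \<open>nat\<close> carry the library's lexicographic order.\<close>
  obtain g :: "'n \<Rightarrow> nat" where "inj g"
    using finite_imp_inj_to_nat_seg[of "UNIV :: 'n set"] by auto
  define \<phi> :: "('n \<Rightarrow>\<^sub>0 nat) \<Rightarrow> (nat \<Rightarrow>\<^sub>0 nat)" where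
    "\<phi> m = (\<Sum>i\<in>UNIV. Poly_Mapping.single (g i) (Poly_Mapping.lookup m i))" for m
  have lookup_\<phi>: "Poly_Mapping.lookup (\<phi> m) (g i) = Poly_Mapping.lookup m i" for m i
  proof -
    have "Poly_Mapping.lookup (\<phi> m) (g i) = (\<Sum>j\<in>UNIV. Poly_Mapping.lookup m i when j = i)"
      unfolding \<phi>_def lookup_sum
      by (rule sum.cong) (auto simp: lookup_single when_def dest: injD[OF \<open>inj g\<close>])
    then show ?thesis
      by (simp add: when_def)
  qed
  have "inj \<phi>"
    by (rule injI, rule poly_mapping_eqI) (metis lookup_\<phi>)
  moreover have "\<phi> (a + b) = \<phi> a + \<phi> b" for a b
    unfolding \<phi>_def by (simp add: lookup_add single_add sum.distrib)
  ultimately show ?thesis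
    using mult_neq_0_if_keys_embed_in_linorder assms by blast
qed

lemma poly_mapping_eq_sum_single:
  "p = (\<Sum>m\<in>Poly_Mapping.keys p. Poly_Mapping.single m (Poly_Mapping.lookup p m))"
proof (rule poly_mapping_eqI)
  fix k
  have "Poly_Mapping.lookup (\<Sum>m\<in>Poly_Mapping.keys p. Poly_Mapping.single m (Poly_Mapping.lookup p m)) k
      = (\<Sum>m\<in>Poly_Mapping.keys p. Poly_Mapping.lookup p k when m = k)"
    unfolding lookup_sum by (rule sum.cong) (auto simp: lookup_single when_def)
  also have "\<dots> = Poly_Mapping.lookup p k"
    by (auto simp: when_def in_keys_iff)
  finally show "Poly_Mapping.lookup p k
      = Poly_Mapping.lookup (\<Sum>m\<in>Poly_Mapping.keys p. Poly_Mapping.single m (Poly_Mapping.lookup p m)) k" ..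
qed

lemma monom_eval_eq_prod_UNIV:
  "monom_eval m z = (\<Prod>i\<in>UNIV. of_int (z i) ^ Poly_Mapping.lookup m i)"
  for m :: "'n::finite \<Rightarrow>\<^sub>0 nat"
  unfolding monom_eval_def by (rule prod.mono_neutral_left) (auto simp: in_keys_iff)

lemma monom_eval_add:
  "monom_eval (m + m') z = monom_eval m z * monom_eval m' z"
  for m :: "'n::finite \<Rightarrow>\<^sub>0 nat"
  by (simp add: monom_eval_eq_prod_UNIV lookup_add power_add prod.distrib)

lemma mpoly_eval_eq_sum_superset:
  assumes "finite S" "Poly_Mapping.keys p \<subseteq> S"
  shows "mpoly_eval p z = (\<Sum>m\<in>S. Poly_Mapping.lookup p m * monom_eval m z)"
  unfolding mpoly_eval_def by (rule sum.mono_neutral_left) (use assms in \<open>auto simp: in_keys_iff\<close>)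

lemma mpoly_eval_0 [simp]: "mpoly_eval 0 z = 0"
  by (simp add: mpoly_eval_def)

lemma mpoly_eval_single [simp]: "mpoly_eval (Poly_Mapping.single m c) z = c * monom_eval m z"
  by (simp add: mpoly_eval_def)

lemma mpoly_eval_1 [simp]: "mpoly_eval 1 z = 1"
  by (simp add: mpoly_eval_def monom_eval_def)

lemma mpoly_eval_add [simp]: "mpoly_eval (p + q) z = mpoly_eval p z + mpoly_eval q z"
proof -
  let ?S = "Poly_Mapping.keys p \<union> Poly_Mapping.keys q"
  have "mpoly_eval (p + q) z = (\<Sum>m\<in>?S. Poly_Mapping.lookup (p + q) m * monom_eval m z)"
    by (rule mpoly_eval_eq_sum_superset) (auto dest: subsetD[OF keys_add])
  also have "\<dots> = mpoly_eval p z + mpoly_eval q z"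
    by (simp add: mpoly_eval_eq_sum_superset[of ?S] lookup_add distrib_right sum.distrib)
  finally show ?thesis .
qed

lemma mpoly_eval_diff [simp]: "mpoly_eval (p - q) z = mpoly_eval p z - mpoly_eval q z"
  using mpoly_eval_add[of "p - q" q z] by (simp add: algebra_simps)

lemma mpoly_eval_sum [simp]: "mpoly_eval (\<Sum>i\<in>I. p i) z = (\<Sum>i\<in>I. mpoly_eval (p i) z)"
  by (induction I rule: infinite_finite_induct) simp_all

lemma mpoly_eval_mult [simp]:
  fixes p q :: "('n::finite, 'a::comm_ring_1) mpoly"
  shows "mpoly_eval (p * q) z = mpoly_eval p z * mpoly_eval q z"
proof -
  let ?P = "Poly_Mapping.keys p" and ?Q = "Poly_Mapping.keys q"
  have "p * q = (\<Sum>a\<in>?P. \<Sum>b\<in>?Q.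
      Poly_Mapping.single (a + b) (Poly_Mapping.lookup p a * Poly_Mapping.lookup q b))"
    by (subst (1 2) poly_mapping_eq_sum_single)
      (simp add: sum_distrib_left sum_distrib_right mult_single sum.swap[of _ ?Q])
  then have "mpoly_eval (p * q) z = (\<Sum>a\<in>?P. \<Sum>b\<in>?Q.
      Poly_Mapping.lookup p a * monom_eval a z * (Poly_Mapping.lookup q b * monom_eval b z))"
    by (simp add: monom_eval_add ac_simps)
  also have "\<dots> = mpoly_eval p z * mpoly_eval q z"
    by (simp add: mpoly_eval_def sum_product)
  finally show ?thesis .
qed

lemma mpoly_eval_prod [simp]:
  fixes p :: "'i \<Rightarrow> ('n::finite, 'a::comm_ring_1) mpoly"
  shows "mpoly_eval (\<Prod>i\<in>I. p i) z = (\<Prod>i\<in>I. mpoly_eval (p i) z)"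
  by (induction I rule: infinite_finite_induct) simp_all

lemma mpoly_eval_power [simp]:
  fixes p :: "('n::finite, 'a::comm_ring_1) mpoly"
  shows "mpoly_eval (p ^ n) z = mpoly_eval p z ^ n"
  by (induction n) simp_all

definition mpoly_var :: "'n \<Rightarrow> ('n, 'a::comm_ring_1) mpoly" where
  "mpoly_var i = Poly_Mapping.single (Poly_Mapping.single i 1) 1"

definition mpoly_const :: "'a::comm_ring_1 \<Rightarrow> ('n, 'a) mpoly" where
  "mpoly_const c = Poly_Mapping.single 0 c"

lemma mpoly_eval_var [simp]: "mpoly_eval (mpoly_var i) z = of_int (z i)"
  by (simp add: mpoly_var_def monom_eval_def)

lemma mpoly_eval_const [simp]: "mpoly_eval (mpoly_const c) z = c"
  by (simp add: mpoly_const_def monom_eval_def)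

definition mpoly_translate :: "('n::finite, 'a::comm_ring_1) mpoly \<Rightarrow> ('n \<Rightarrow> int) \<Rightarrow> ('n, 'a) mpoly" where
  "mpoly_translate p v = (\<Sum>m\<in>Poly_Mapping.keys p. mpoly_const (Poly_Mapping.lookup p m) *
     (\<Prod>i\<in>UNIV. (mpoly_var i + mpoly_const (of_int (v i))) ^ Poly_Mapping.lookup m i))"

lemma mpoly_eval_translate: "mpoly_eval (mpoly_translate p v) z = mpoly_eval p (\<lambda>j. z j + v j)"
  by (simp add: mpoly_translate_def mpoly_eval_def[of p] monom_eval_eq_prod_UNIV)

text \<open>Over a field of positive characteristic a nonzero polynomial can vanish on all of \<open>\<int>\<^sup>k\<close>
  (e.g. \<open>x\<^sup>p - x\<close>), so nonvanishing of the translate has to come from \<open>f\<close>.\<close>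

lemma mpoly_translate_neq_0:
  fixes f :: "('n::finite \<Rightarrow> int) \<Rightarrow> 'a::field" and p :: "('n, 'a) mpoly"
  assumes "\<not> zero_divisor f" "p \<noteq> 0"
  shows "mpoly_translate p v \<noteq> 0"
proof
  assume "mpoly_translate p v = 0"
  then have "mpoly_eval p w = 0" for w
    using mpoly_eval_translate[of p v "\<lambda>j. w j - v j"] by simp
  with assms show False
    unfolding zero_divisor_def by (metis mult_zero_left)
qed

lemma is_term_ratio_add:
  fixes f :: "('n::finite \<Rightarrow> int) \<Rightarrow> 'a::field"
  assumes nzd: "\<not> zero_divisor f"
    and v: "is_term_ratio f v A B" and w: "is_term_ratio f w C D"
  shows "is_term_ratio f (\<lambda>j. v j + w j) (A * mpoly_translate C v) (B * mpoly_translate D v)"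
  unfolding is_term_ratio_def
proof (intro conjI allI)
  show "A * mpoly_translate C v \<noteq> 0" "B * mpoly_translate D v \<noteq> 0"
    using v w mpoly_mult_neq_0 mpoly_translate_neq_0[OF nzd] unfolding is_term_ratio_def by metis+
  fix z
  let ?z' = "\<lambda>j. z j + v j"
  have "mpoly_eval (A * mpoly_translate C v) z * f z = mpoly_eval C ?z' * (mpoly_eval A z * f z)"
    by (simp add: mpoly_eval_translate)
  also have "\<dots> = mpoly_eval B z * (mpoly_eval C ?z' * f ?z')"
    using v by (simp add: is_term_ratio_def shift_def)
  also have "\<dots> = mpoly_eval B z * (mpoly_eval D ?z' * f (\<lambda>j. ?z' j + w j))"
    using w by (simp add: is_term_ratio_def shift_def)
  also have "\<dots> = mpoly_eval (B * mpoly_translate D v) z * shift f (\<lambda>j. v j + w j) z"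
    by (simp add: mpoly_eval_translate shift_def add.assoc)
  finally show "mpoly_eval (A * mpoly_translate C v) z * f z
      = mpoly_eval (B * mpoly_translate D v) z * shift f (\<lambda>j. v j + w j) z" .
qed

lemma is_term_ratio_uminus:
  fixes f :: "('n::finite \<Rightarrow> int) \<Rightarrow> 'a::field"
  assumes nzd: "\<not> zero_divisor f" and v: "is_term_ratio f v A B"
  shows "is_term_ratio f (\<lambda>j. - v j) (mpoly_translate B (\<lambda>j. - v j)) (mpoly_translate A (\<lambda>j. - v j))"
  unfolding is_term_ratio_def
proof (intro conjI allI)
  show "mpoly_translate B (\<lambda>j. - v j) \<noteq> 0" "mpoly_translate A (\<lambda>j. - v j) \<noteq> 0"
    using v mpoly_translate_neq_0[OF nzd] by (auto simp: is_term_ratio_def)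
  fix z
  have "mpoly_eval A (\<lambda>j. z j - v j) * f (\<lambda>j. z j - v j)
      = mpoly_eval B (\<lambda>j. z j - v j) * f (\<lambda>j. z j - v j + v j)"
    using v by (simp add: is_term_ratio_def shift_def)
  then show "mpoly_eval (mpoly_translate B (\<lambda>j. - v j)) z * f z
      = mpoly_eval (mpoly_translate A (\<lambda>j. - v j)) z * shift f (\<lambda>j. - v j) z"
    by (simp add: mpoly_eval_translate shift_def)
qed

lemma is_term_ratio_cross_eq:
  fixes f :: "('n::finite \<Rightarrow> int) \<Rightarrow> 'a::field"
  assumes nzd: "\<not> zero_divisor f"
    and AB: "is_term_ratio f v A B" and AB': "is_term_ratio f v A' B'"
  shows "A * B' = A' * B"
proof -
  have "mpoly_eval (A * B' - A' * B) z * f z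
      = mpoly_eval B' z * (mpoly_eval A z * f z) - mpoly_eval B z * (mpoly_eval A' z * f z)" for z
    by (simp add: algebra_simps)
  also have "\<dots> z = 0" for z
    using AB AB' by (simp add: is_term_ratio_def)
  finally have "A * B' - A' * B = 0"
    using nzd unfolding zero_divisor_def by blast
  then show ?thesis
    by simp
qed

lemma int_vector_induct [case_names unit add uminus]:
  fixes P :: "('n::finite \<Rightarrow> int) \<Rightarrow> bool"
  assumes unit: "\<And>i. P (unit_vec i)"
    and add: "\<And>a b. P a \<Longrightarrow> P b \<Longrightarrow> P (\<lambda>j. a j + b j)"
    and uminus: "\<And>a. P a \<Longrightarrow> P (\<lambda>j. - a j)"
  shows "P v"
proof -
  have zero: "P (\<lambda>_. 0)"
    using add[OF unit[of undefined] uminus[OF unit[of undefined]]] by simp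
  have multiple: "P (\<lambda>j. n * unit_vec i j)" for n i
  proof (induction n rule: int_induct[where k = 0])
    case base
    then show ?case using zero by simp
  next
    case (step1 n)
    from add[OF step1(2) unit[of i]] show ?case by (simp add: algebra_simps)
  next
    case (step2 n)
    from add[OF step2(2) uminus[OF unit[of i]]] show ?case by (simp add: algebra_simps)
  qed
  have "P (\<lambda>j. \<Sum>i\<in>I. v i * unit_vec i j)" for I
  proof (induction I rule: infinite_finite_induct)
    case (insert i I)
    with add[OF multiple[of "v i" i] insert(3)] show ?case by simp
  qed (simp_all add: zero)
  moreover have "(\<lambda>j. \<Sum>i\<in>UNIV. v i * unit_vec i j) = v"
    by (simp add: unit_vec_def if_distrib cong: if_cong)
  ultimately show ?thesis
    by metis
qed

theorem lemmaB6:
  fixes f :: "('n::finite \<Rightarrow> int) \<Rightarrow> 'a::field"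
  assumes "hypergeometric_term f"
    and "\<not> zero_divisor f"
  shows "\<forall>v. unique_term_ratio f v"
proof
  fix v :: "'n \<Rightarrow> int"
  have "\<exists>A B. is_term_ratio f v A B"
  proof (induction v rule: int_vector_induct)
    case (unit i)
    then show ?case
      using assms(1) unfolding hypergeometric_term_def is_term_ratio_def by blast
  next
    case (add a b)
    then show ?case
      using is_term_ratio_add[OF assms(2)] by blast
  next
    case (uminus a)
    then show ?case
      using is_term_ratio_uminus[OF assms(2)] by blast
  qed
  then show "unique_term_ratio f v"
    unfolding unique_term_ratio_def using is_term_ratio_cross_eq[OF assms(2)] by blast
qed

end
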